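(* Let $S\ge 2$ and $\alpha_1,\dots,\alpha_S>0$. As $n\to\infty$ through values with $m_j=\alpha_j n$ positive integers for all $j$, and with $M=m_1+\dots+m_S$, $$B(m_1,\dots,m_S)\sim\frac{m_1\cdots m_S}{(M-m_1)\cdots(M-m_S)}\cdot\frac{M!}{m_1!\cdots m_S!}.$$
   Context: For positive integers $m_1,\dots,m_S$, $B(m_1,\dots,m_S)=\sum_{\ell_1=0}^{m_1-1}\cdots\sum_{\ell_S=0}^{m_S-1}\frac{(\ell_1+\dots+\ell_S)!}{\ell_1!\cdots\ell_S!}$; equivalently $B(m_1,\dots,m_S)=\sum_{k_1=1}^{m_1}\cdots\sum_{k_S=1}^{m_S}\binom{m_1}{k_1}\cdots\binom{m_S}{k_S}E(k_1-1,\dots,k_S-1)$ where $E$ is the block derangement number. *)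

theory Defs
  imports Complex_Main "HOL-Library.FuncSet"
begin

definition blockB :: "nat \<Rightarrow> (nat \<Rightarrow> nat) \<Rightarrow> real" where
  "blockB S m = (\<Sum>l \<in> PiE {..<S} (\<lambda>j. {..<m j}).
      fact (\<Sum>j<S. l j) / (\<Prod>j<S. fact (l j)))"

end

theory Submission
  imports Defs
begin

text \<open>
  Writing \<open>d\<^sub>j = m\<^sub>j - l\<^sub>j\<close>, every multinomial term of \<open>B\<close> equals \<open>M! / \<Prod> m\<^sub>j!\<close> times
  \<open>R(d) = \<Prod> (m\<^sub>j)\<^sub>d\<^sub>j / (M)\<^sub>D\<close> (falling factorials, \<open>D = \<Sum> d\<^sub>j\<close>; \<open>draw_prob\<close> below): the probability that \<open>D\<close> draws
  without replacement from an urn with blocks of sizes \<open>m\<^sub>j\<close> give first \<open>d\<^sub>0\<close> balls of block 0,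
  then \<open>d\<^sub>1\<close> balls of block 1, and so on. So it suffices to show that \<open>\<Sum> R(d)\<close> over
  \<open>1 \<le> d\<^sub>j \<le> m\<^sub>j\<close> tends to \<open>\<Prod> \<alpha>\<^sub>j / (A - \<alpha>\<^sub>j)\<close>, where \<open>A = \<Sum> \<alpha>\<^sub>j\<close>.
  For \<open>D\<close> small compared with \<open>M\<close>, \<open>R(d)\<close> is close to \<open>\<Prod> (m\<^sub>j / M)\<^bsup>d\<^sub>j\<^esup>\<close>, and summing these
  gives a product of geometric series; restricting to \<open>d\<^sub>j \<le> K\<close> yields the lower bound.
  For the upper bound, the terms with \<open>D \<le> \<delta> M\<close> are dominated by \<open>\<Prod> (m\<^sub>j / ((1 - \<delta>) M))\<^bsup>d\<^sub>j\<^esup>\<close>,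
  and the remaining ones are exponentially small because \<open>R(d) \<le> \<rho>\<^bsup>D/2\<^esup>\<close> for a fixed
  \<open>\<rho> < 1\<close>.
\<close>

definition ffact :: "real \<Rightarrow> nat \<Rightarrow> real" where
  "ffact x k = (\<Prod>i<k. x - real i)"

lemma ffact_0 [simp]: "ffact x 0 = 1"
  by (simp add: ffact_def)

lemma ffact_Suc: "ffact x (Suc k) = ffact x k * (x - real k)"
  by (simp add: ffact_def)

lemma ffact_add: "ffact x (a + b) = ffact x a * ffact (x - real a) b"
  by (induction b) (auto simp: ffact_def algebra_simps)

lemma ffact_sum: "ffact x (\<Sum>j<(n::nat). d j) = (\<Prod>j<n. ffact (x - real (\<Sum>i<j. d i)) (d j))"
  by (induction n) (auto simp: ffact_add)

lemma fact_eq_ffact_mult_fact: "k \<le> n \<Longrightarrow> fact n = ffact (real n) k * fact (n - k)"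
proof (induction k)
  case (Suc k)
  then have "n - k = Suc (n - Suc k)"
    by simp
  with Suc.prems have "fact (n - k) = (real n - real k) * (fact (n - Suc k) :: real)"
    by (simp add: of_nat_diff)
  with Suc show ?case
    by (simp add: ffact_Suc)
qed simp

lemma ffact_pos: "real k \<le> x \<Longrightarrow> 0 < ffact x k"
  unfolding ffact_def by (intro prod_pos) auto

lemma ffact_le_power: "0 \<le> x \<Longrightarrow> real k \<le> x + 1 \<Longrightarrow> ffact x k \<le> x ^ k"
  unfolding ffact_def using prod_mono[of "{..<k}" "\<lambda>i. x - real i" "\<lambda>_. x"] by auto

lemma power_le_ffact: "0 \<le> y \<Longrightarrow> y + real k \<le> x + 1 \<Longrightarrow> y ^ k \<le> ffact x k"
  unfolding ffact_def using prod_mono[of "{..<k}" "\<lambda>_. y" "\<lambda>i. x - real i"] by auto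

lemma ffact_divide_ffact_le_power:
  assumes "real k \<le> a" "a \<le> T" "T \<le> N" "0 < T"
  shows "ffact a k / ffact N k \<le> (a / T) ^ k"
proof -
  have "(a - real i) / (N - real i) \<le> a / T" if "i < k" for i
  proof -
    have "0 \<le> a * (N - T) + real i * (T - a)"
      using assms by simp
    then have "(a - real i) * T \<le> a * (N - real i)"
      by (simp add: algebra_simps)
    then show ?thesis
      using assms that by (simp add: divide_simps)
  qed
  moreover have "0 \<le> (a - real i) / (N - real i)" if "i < k" for i
    using assms that by simp
  ultimately have "(\<Prod>i<k. (a - real i) / (N - real i)) \<le> (\<Prod>i<k. a / T)"
    by (intro prod_mono) auto
  then show ?thesis
    by (simp add: ffact_def prod_dividef)
qed

definition draw_prob :: "nat \<Rightarrow> (nat \<Rightarrow> nat) \<Rightarrow> (nat \<Rightarrow> nat) \<Rightarrow> real" where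
  "draw_prob S m d =
     (\<Prod>j<S. ffact (real (m j)) (d j)) / ffact (real (\<Sum>j<S. m j)) (\<Sum>j<S. d j)"

definition draw_sum :: "nat \<Rightarrow> (nat \<Rightarrow> nat) \<Rightarrow> real" where
  "draw_sum S m = (\<Sum>d \<in> PiE {..<S} (\<lambda>j. {1..m j}). draw_prob S m d)"

lemma draw_prob_nonneg:
  assumes "\<forall>j<S. d j \<le> m j"
  shows "0 \<le> draw_prob S m d"
proof -
  have "(\<Sum>j<S. real (d j)) \<le> (\<Sum>j<S. real (m j))"
    using assms by (intro sum_mono) auto
  then show ?thesis
    unfolding draw_prob_def using assms
    by (intro divide_nonneg_nonneg prod_nonneg less_imp_le[OF ffact_pos]) auto
qed

lemma multinomial_eq_mult_draw_prob:
  assumes "\<forall>j<S. d j \<le> m j"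
  shows "fact (\<Sum>j<S. m j - d j) / (\<Prod>j<S. fact (m j - d j)) =
         fact (\<Sum>j<S. m j) / (\<Prod>j<S. fact (m j)) * draw_prob S m d"
proof -
  define M where "M = (\<Sum>j<S. m j)"
  define D where "D = (\<Sum>j<S. d j)"
  have "D \<le> M"
    unfolding D_def M_def using assms by (intro sum_mono) auto
  have "(\<Sum>j<S. m j - d j) = M - D"
    unfolding M_def D_def using assms by (intro sum_subtractf_nat) auto
  moreover have "fact M = ffact (real M) D * fact (M - D)"
    using \<open>D \<le> M\<close> by (rule fact_eq_ffact_mult_fact)
  moreover have "(\<Prod>j<S. fact (m j) :: real) =
      (\<Prod>j<S. ffact (real (m j)) (d j)) * (\<Prod>j<S. fact (m j - d j))"
    unfolding prod.distrib[symmetric] using assms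
    by (intro prod.cong refl) (simp add: fact_eq_ffact_mult_fact)
  moreover have "0 < ffact (real M) D"
    using \<open>D \<le> M\<close> by (intro ffact_pos) auto
  moreover have "\<forall>j\<in>{..<S}. ffact (real (m j)) (d j) \<noteq> 0"
    using assms ffact_pos[of "d _" "real (m _)"] by force
  ultimately show ?thesis
    unfolding draw_prob_def M_def[symmetric] D_def[symmetric] by (simp add: field_simps)
qed

lemma blockB_eq_multinomial_mult_draw_sum:
  "blockB S m = fact (\<Sum>j<S. m j) / (\<Prod>j<S. fact (m j)) * draw_sum S m"
proof -
  let ?complement = "\<lambda>l. restrict (\<lambda>j. m j - l j) {..<S}"
  have "blockB S m = (\<Sum>d \<in> PiE {..<S} (\<lambda>j. {1..m j}).
           fact (\<Sum>j<S. m j - d j) / (\<Prod>j<S. fact (m j - d j)))"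
    unfolding blockB_def
    by (rule sum.reindex_bij_witness[where i = ?complement and j = ?complement])
      (auto simp: PiE_iff fun_eq_iff extensional_def Ball_def
        intro!: sum.cong prod.cong arg_cong[where f = fact] arg_cong2[where f = "(/)"])
  also have "\<dots> = (\<Sum>d \<in> PiE {..<S} (\<lambda>j. {1..m j}).
           fact (\<Sum>j<S. m j) / (\<Prod>j<S. fact (m j)) * draw_prob S m d)"
    by (intro sum.cong refl multinomial_eq_mult_draw_prob) (auto simp: PiE_iff)
  finally show ?thesis
    by (simp add: draw_sum_def sum_distrib_left)
qed

lemma draw_prob_le_prod_power:
  assumes "\<forall>j<S. d j \<le> m j" and "(\<Sum>j<S. d j) < (\<Sum>j<S. m j)"
  shows "draw_prob S m d \<le>
    (\<Prod>j<S. (real (m j) / (real (\<Sum>j<S. m j) - real (\<Sum>j<S. d j))) ^ d j)"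
proof -
  define M where "M = (\<Sum>j<S. m j)"
  define D where "D = (\<Sum>j<S. d j)"
  have "D < M"
    using assms(2) unfolding M_def D_def .
  have "(\<Prod>j<S. ffact (real (m j)) (d j)) \<le> (\<Prod>j<S. real (m j) ^ d j)"
    using assms(1) by (intro prod_mono conjI ffact_le_power less_imp_le[OF ffact_pos]) auto
  moreover have "(real M - real D) ^ D \<le> ffact (real M) D"
    using \<open>D < M\<close> by (intro power_le_ffact) auto
  moreover have "0 < (real M - real D) ^ D"
    using \<open>D < M\<close> by simp
  ultimately have "draw_prob S m d \<le> (\<Prod>j<S. real (m j) ^ d j) / (real M - real D) ^ D"
    unfolding draw_prob_def M_def[symmetric] D_def[symmetric]
    by (intro frac_le prod_nonneg) auto
  also have "\<dots> = (\<Prod>j<S. (real (m j) / (real M - real D)) ^ d j)"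
    unfolding D_def power_sum by (simp add: power_divide prod_dividef)
  finally show ?thesis
    unfolding M_def D_def .
qed

lemma prod_power_le_draw_prob:
  assumes "\<forall>j<S. d j \<le> K" and "\<forall>j<S. K \<le> m j"
  shows "(\<Prod>j<S. ((real (m j) - real K) / real (\<Sum>j<S. m j)) ^ d j) \<le> draw_prob S m d"
proof -
  define M where "M = (\<Sum>j<S. m j)"
  define D where "D = (\<Sum>j<S. d j)"
  have dm: "\<forall>j<S. d j \<le> m j"
    using assms le_trans by blast
  then have "D \<le> M"
    unfolding D_def M_def by (intro sum_mono) auto
  have "(\<Prod>j<S. (real (m j) - real K) ^ d j) \<le> (\<Prod>j<S. ffact (real (m j)) (d j))"
    using assms by (intro prod_mono conjI power_le_ffact zero_le_power) auto
  moreover have "0 < ffact (real M) D"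
    using \<open>D \<le> M\<close> by (intro ffact_pos) auto
  moreover have "ffact (real M) D \<le> real M ^ D"
    using \<open>D \<le> M\<close> by (intro ffact_le_power) auto
  ultimately have "(\<Prod>j<S. (real (m j) - real K) ^ d j) / real M ^ D \<le> draw_prob S m d"
    unfolding draw_prob_def M_def[symmetric] D_def[symmetric] using dm
    by (intro frac_le prod_nonneg less_imp_le[OF ffact_pos]) auto
  moreover have "(\<Prod>j<S. (real (m j) - real K) ^ d j) / real M ^ D =
      (\<Prod>j<S. ((real (m j) - real K) / real M) ^ d j)"
    unfolding D_def power_sum by (simp add: power_divide prod_dividef)
  ultimately show ?thesis
    unfolding M_def by simp
qed

lemma draw_prob_eq_prod:
  "draw_prob S m d =
    (\<Prod>j<S. ffact (real (m j)) (d j) / ffact (real (\<Sum>i<S. m i) - real (\<Sum>i<j. d i)) (d j))"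
  unfolding draw_prob_def ffact_sum by (simp add: prod_dividef)

lemma draw_factor_le:
  fixes S :: nat
  assumes le: "\<forall>i<S. d i \<le> m i" and "j < S" "0 < m j"
  shows "0 \<le> ffact (real (m j)) (d j) / ffact (real (\<Sum>i<S. m i) - real (\<Sum>i<j. d i)) (d j) \<and>
    ffact (real (m j)) (d j) / ffact (real (\<Sum>i<S. m i) - real (\<Sum>i<j. d i)) (d j) \<le>
      (real (m j) / real (\<Sum>i\<in>{j..<S}. m i)) ^ d j"
proof -
  define T where "T = (\<Sum>i\<in>{j..<S}. m i)"
  have "m j \<le> T"
    unfolding T_def using \<open>j < S\<close> by (intro member_le_sum) auto
  moreover have "(\<Sum>i<S. m i) = (\<Sum>i<j. m i) + T"
    unfolding T_def using \<open>j < S\<close> sum.atLeastLessThan_concat[of 0 j S m]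
    by (simp add: atLeast0LessThan)
  moreover have "(\<Sum>i<j. d i) \<le> (\<Sum>i<j. m i)"
    using le \<open>j < S\<close> by (intro sum_mono) auto
  ultimately have "real T \<le> real (\<Sum>i<S. m i) - real (\<Sum>i<j. d i)"
    and "real (m j) \<le> real T" "0 < real T"
    using \<open>0 < m j\<close> by linarith+
  with le \<open>j < S\<close> show ?thesis
    unfolding T_def[symmetric]
    by (auto intro!: ffact_divide_ffact_le_power divide_nonneg_nonneg less_imp_le[OF ffact_pos])
qed

lemma draw_prob_le_power_last:
  assumes le: "\<forall>j<Suc S. d j \<le> m j" and pos: "\<forall>j<Suc S. 0 < m j"
  shows "draw_prob (Suc S) m d \<le> (1 - real (m S) / real (\<Sum>j<Suc S. m j)) ^ (\<Sum>j<S. d j)"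
proof -
  define M where "M = (\<Sum>j<Suc S. m j)"
  define T where "T j = (\<Sum>i\<in>{j..<Suc S}. m i)" for j
  define F where "F j = ffact (real (m j)) (d j) / ffact (real M - real (\<Sum>i<j. d i)) (d j)" for j
  define \<rho> where "\<rho> = 1 - real (m S) / real M"
  have F: "0 \<le> F j" "F j \<le> (real (m j) / real (T j)) ^ d j" if "j < Suc S" for j
    using draw_factor_le[OF le that] pos that unfolding F_def T_def M_def by auto
  have "m S \<le> M"
    unfolding M_def by (intro member_le_sum) auto
  then have "0 \<le> \<rho>"
    unfolding \<rho>_def by (auto simp: divide_le_eq_1)
  have ratio: "real (m j) / real (T j) \<le> \<rho>" if "j < S" for j
  proof -
    have "m j + m S \<le> T j"
      unfolding T_def using that sum_mono2[of "{j..<Suc S}" "{j, S}" m] by auto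
    moreover have "T j \<le> M"
      unfolding T_def M_def by (intro sum_mono2) auto
    moreover have "0 < m S"
      using pos by simp
    ultimately have "real (m S) / real M \<le> real (m S) / real (T j)" and "0 < T j"
      by (auto intro: divide_left_mono)
    then have "real (m j) / real (T j) + real (m S) / real M \<le> (real (m j) + real (m S)) / real (T j)"
      by (simp add: add_divide_distrib)
    also have "\<dots> \<le> 1"
      using \<open>m j + m S \<le> T j\<close> \<open>0 < T j\<close> by simp
    finally show ?thesis
      unfolding \<rho>_def by simp
  qed
  have "(\<Prod>j<Suc S. F j) \<le> (\<Prod>j<S. \<rho> ^ d j) * 1"
    unfolding prod.lessThan_Suc
  proof (intro mult_mono prod_mono conjI)
    fix j assume "j \<in> {..<S}"
    then have "(real (m j) / real (T j)) ^ d j \<le> \<rho> ^ d j"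
      using ratio[of j] by (intro power_mono) auto
    with F[of j] \<open>j \<in> {..<S}\<close> show "0 \<le> F j" "F j \<le> \<rho> ^ d j"
      by auto
  next
    have "m S \<le> T S" "0 < m S"
      unfolding T_def using pos by simp_all
    then have "(real (m S) / real (T S)) ^ d S \<le> 1"
      by (intro power_le_one) auto
    with F[of S] show "F S \<le> 1" "0 \<le> F S"
      by auto
  qed (use F \<open>0 \<le> \<rho>\<close> in \<open>auto intro: prod_nonneg\<close>)
  then show ?thesis
    unfolding draw_prob_eq_prod \<rho>_def F_def M_def by (simp add: power_sum)
qed

lemma draw_prob_reverse:
  "draw_prob S (\<lambda>j. m (S - Suc j)) (\<lambda>j. d (S - Suc j)) = draw_prob S m d"
  unfolding draw_prob_def
  using prod.nat_diff_reindex[of "\<lambda>j. ffact (real (m j)) (d j)" S]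
    sum.nat_diff_reindex[of m S] sum.nat_diff_reindex[of d S]
  by simp

lemma le_sqrt_power_if_le_powers:
  fixes P \<rho> :: real
  assumes "0 \<le> P" "0 \<le> \<rho>" "\<rho> \<le> 1" "P \<le> \<rho> ^ a" "P \<le> \<rho> ^ b" "D \<le> a + b"
  shows "P \<le> sqrt \<rho> ^ D"
proof -
  have "P\<^sup>2 \<le> \<rho> ^ a * \<rho> ^ b"
    unfolding power2_eq_square using assms by (intro mult_mono) auto
  also have "\<dots> \<le> \<rho> ^ D"
    unfolding power_add[symmetric] using assms by (intro power_decreasing) auto
  finally have "P \<le> sqrt (\<rho> ^ D)"
    by (rule real_le_rsqrt)
  then show ?thesis
    by (simp add: real_sqrt_power)
qed

text \<open>
  Drawing the blocks in the given order bounds \<open>R(d)\<close> by \<open>\<rho>\<close> to the power of all \<open>d\<^sub>j\<close> except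
  the last; drawing them in the reverse order, by all except the first. The two exponents add
  up to at least \<open>D\<close>.
\<close>
lemma draw_prob_le_sqrt_power:
  assumes "2 \<le> S" and le: "\<forall>j<S. d j \<le> m j" and pos: "\<forall>j<S. 0 < m j"
  shows "draw_prob S m d \<le>
    sqrt (1 - real (min (m 0) (m (S - 1))) / real (\<Sum>j<S. m j)) ^ (\<Sum>j<S. d j)"
proof -
  obtain S' where S: "S = Suc S'" and "0 < S'"
    using assms(1) by (cases S) auto
  define M where "M = (\<Sum>j<S. m j)"
  define \<rho> where "\<rho> = 1 - real (min (m 0) (m S')) / real M"
  have base: "0 \<le> 1 - real (m i) / real M" "1 - real (m i) / real M \<le> \<rho>" if "i \<in> {0, S'}" for i
  proof -
    have "m i \<le> M"
      unfolding M_def using that S by (intro member_le_sum) auto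
    with that pos S show "0 \<le> 1 - real (m i) / real M" "1 - real (m i) / real M \<le> \<rho>"
      unfolding \<rho>_def by (auto intro!: divide_right_mono)
  qed
  have "draw_prob S m d \<le> (1 - real (m S') / real M) ^ (\<Sum>j<S'. d j)"
    unfolding M_def S using le pos S by (intro draw_prob_le_power_last) auto
  also have "\<dots> \<le> \<rho> ^ (\<Sum>j<S'. d j)"
    using base[of S'] by (intro power_mono) auto
  finally have forward: "draw_prob S m d \<le> \<rho> ^ (\<Sum>j<S'. d j)" .
  have "draw_prob S m d = draw_prob (Suc S') (\<lambda>j. m (S - Suc j)) (\<lambda>j. d (S - Suc j))"
    unfolding S by (rule draw_prob_reverse[symmetric])
  also have "\<dots> \<le> (1 - real (m (S - Suc S')) / real (\<Sum>j<Suc S'. m (S - Suc j))) ^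
      (\<Sum>j<S'. d (S - Suc j))"
    using le pos S by (intro draw_prob_le_power_last) auto
  also have "\<dots> = (1 - real (m 0) / real M) ^ (\<Sum>j<S'. d (S - Suc j))"
    unfolding M_def S using sum.nat_diff_reindex[of m "Suc S'"] by simp
  also have "\<dots> \<le> \<rho> ^ (\<Sum>j<S'. d (S - Suc j))"
    using base[of 0] by (intro power_mono) auto
  finally have backward: "draw_prob S m d \<le> \<rho> ^ (\<Sum>j<S'. d (S - Suc j))" .
  have "d 0 + d S' \<le> (\<Sum>j<S. d j)"
    unfolding S using sum_mono2[of "{..<Suc S'}" "{0, S'}" d] \<open>0 < S'\<close> by auto
  moreover have "(\<Sum>j<S. d j) = (\<Sum>j<S'. d j) + d S'"
    unfolding S by simp
  moreover have "(\<Sum>j<S. d j) = (\<Sum>j<S'. d (S - Suc j)) + d 0"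
    unfolding S by (subst sum.nat_diff_reindex[symmetric]) simp
  ultimately have "(\<Sum>j<S. d j) \<le> (\<Sum>j<S'. d j) + (\<Sum>j<S'. d (S - Suc j))"
    by linarith
  with forward backward base[of 0] le have "draw_prob S m d \<le> sqrt \<rho> ^ (\<Sum>j<S. d j)"
    by (intro le_sqrt_power_if_le_powers draw_prob_nonneg) (auto simp: \<rho>_def)
  then show ?thesis
    unfolding \<rho>_def M_def S by simp
qed

lemma sums_power_Suc: "\<bar>q :: real\<bar> < 1 \<Longrightarrow> (\<lambda>n. q ^ Suc n) sums (q / (1 - q))"
  using sums_mult[OF geometric_sums, of q q] by simp

lemma tendsto_sum_power_atLeast1:
  "\<bar>q :: real\<bar> < 1 \<Longrightarrow> (\<lambda>N. \<Sum>x\<in>{1..N}. q ^ x) \<longlonglongrightarrow> q / (1 - q)"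
  using sums_power_Suc[unfolded sums_def] by (simp add: sum.atLeast1_atMost_eq)

lemma sum_power_atLeast1_le: "0 \<le> (q :: real) \<Longrightarrow> q < 1 \<Longrightarrow> (\<Sum>x\<in>{1..N}. q ^ x) \<le> q / (1 - q)"
  using sum_le_suminf[of "\<lambda>n. q ^ Suc n" "{..<N}"] sums_power_Suc[of q]
  by (simp add: sum.atLeast1_atMost_eq sums_iff)

lemma prod_sum_power_le_draw_sum:
  assumes "\<forall>j<S. K \<le> m j"
  shows "(\<Prod>j<S. \<Sum>x\<in>{1..K}. ((real (m j) - real K) / real (\<Sum>j<S. m j)) ^ x) \<le> draw_sum S m"
proof -
  define a where "a j = (real (m j) - real K) / real (\<Sum>j<S. m j)" for j
  have "(\<Prod>j<S. \<Sum>x\<in>{1..K}. a j ^ x) = (\<Sum>d\<in>PiE {..<S} (\<lambda>_. {1..K}). \<Prod>j<S. a j ^ d j)"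
    by (rule prod_sum_PiE) auto
  also have "\<dots> \<le> (\<Sum>d\<in>PiE {..<S} (\<lambda>_. {1..K}). draw_prob S m d)"
    unfolding a_def using assms by (intro sum_mono prod_power_le_draw_prob) (auto simp: PiE_iff)
  also have "\<dots> \<le> draw_sum S m"
    unfolding draw_sum_def using assms
    by (intro sum_mono2 finite_PiE PiE_mono draw_prob_nonneg) (auto simp: PiE_iff intro: le_trans)
  finally show ?thesis
    unfolding a_def .
qed

lemma power2_power_le_powr_mult_power:
  fixes \<eta> x :: real
  assumes "0 < \<eta>" "\<eta> \<le> 1" "x \<le> real D"
  shows "(\<eta>\<^sup>2) ^ D \<le> \<eta> powr x * \<eta> ^ D"
proof -
  have "\<eta> ^ D = \<eta> powr real D"
    using assms by (simp add: powr_realpow)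
  also have "\<dots> \<le> \<eta> powr x"
    using assms by (intro powr_mono') auto
  finally show ?thesis
    using assms by (simp add: power2_eq_square power_mult_distrib mult_right_mono)
qed

lemma draw_prob_le_geometric_plus_tail:
  assumes le: "\<forall>j<S. d j \<le> m j" and "0 < (\<Sum>j<S. m j)" and "0 \<le> \<delta>" "\<delta> < 1"
    and q: "\<forall>j<S. 0 \<le> q j \<and> real (m j) \<le> q j * ((1 - \<delta>) * real (\<Sum>j<S. m j))"
    and "0 < \<eta>" "\<eta> < 1"
    and decay: "draw_prob S m d \<le> (\<eta>\<^sup>2) ^ (\<Sum>j<S. d j)"
  shows "draw_prob S m d \<le>
    (\<Prod>j<S. q j ^ d j) + \<eta> powr (\<delta> * real (\<Sum>j<S. m j)) * (\<Prod>j<S. \<eta> ^ d j)"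
proof -
  define M where "M = (\<Sum>j<S. m j)"
  define D where "D = (\<Sum>j<S. d j)"
  have "0 < M"
    unfolding M_def by (rule assms(2))
  then have gap_pos: "0 < (1 - \<delta>) * real M"
    using assms by simp
  have first_nonneg: "0 \<le> (\<Prod>j<S. q j ^ d j)"
    using q by (intro prod_nonneg zero_le_power) auto
  have second_nonneg: "0 \<le> \<eta> powr (\<delta> * real M) * (\<Prod>j<S. \<eta> ^ d j)"
    using \<open>0 < \<eta>\<close> by (intro mult_nonneg_nonneg prod_nonneg) auto
  show ?thesis
  proof (cases "real D \<le> \<delta> * real M")
    case True
    then have gap: "(1 - \<delta>) * real M \<le> real M - real D"
      by (simp add: algebra_simps)
    have "draw_prob S m d \<le> (\<Prod>j<S. (real (m j) / (real M - real D)) ^ d j)"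
      unfolding M_def D_def using le gap gap_pos
      by (intro draw_prob_le_prod_power) (auto simp flip: M_def D_def)
    also have "\<dots> \<le> (\<Prod>j<S. q j ^ d j)"
    proof (intro prod_mono conjI power_mono zero_le_power)
      fix j assume "j \<in> {..<S}"
      have "real (m j) / (real M - real D) \<le> real (m j) / ((1 - \<delta>) * real M)"
        using gap gap_pos by (intro divide_left_mono) auto
      also have "\<dots> \<le> q j"
        using q \<open>j \<in> {..<S}\<close> gap_pos unfolding M_def by (simp add: divide_le_eq)
      finally show "real (m j) / (real M - real D) \<le> q j" .
    qed (use gap gap_pos in auto)
    finally show ?thesis
      using second_nonneg unfolding M_def by linarith
  next
    case False
    then have "(\<eta>\<^sup>2) ^ D \<le> \<eta> powr (\<delta> * real M) * \<eta> ^ D"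
      using \<open>0 < \<eta>\<close> \<open>\<eta> < 1\<close> by (intro power2_power_le_powr_mult_power) auto
    then have "draw_prob S m d \<le> \<eta> powr (\<delta> * real M) * \<eta> ^ D"
      using decay unfolding D_def by linarith
    also have "\<dots> = \<eta> powr (\<delta> * real M) * (\<Prod>j<S. \<eta> ^ d j)"
      unfolding D_def by (simp add: power_sum)
    finally show ?thesis
      using first_nonneg unfolding M_def by linarith
  qed
qed

lemma draw_sum_le_geometric_plus_tail:
  assumes "0 < (\<Sum>j<S. m j)" and "0 \<le> \<delta>" "\<delta> < 1"
    and q: "\<forall>j<S. 0 \<le> q j \<and> real (m j) \<le> q j * ((1 - \<delta>) * real (\<Sum>j<S. m j))"
      "\<forall>j<S. q j < 1"
    and "0 < \<eta>" "\<eta> < 1"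
    and decay: "\<forall>d \<in> PiE {..<S} (\<lambda>j. {1..m j}). draw_prob S m d \<le> (\<eta>\<^sup>2) ^ (\<Sum>j<S. d j)"
  shows "draw_sum S m \<le>
    (\<Prod>j<S. q j / (1 - q j)) + \<eta> powr (\<delta> * real (\<Sum>j<S. m j)) * (\<eta> / (1 - \<eta>)) ^ S"
proof -
  define E where "E = \<eta> powr (\<delta> * real (\<Sum>j<S. m j))"
  have "draw_sum S m \<le> (\<Sum>d \<in> PiE {..<S} (\<lambda>j. {1..m j}).
      (\<Prod>j<S. q j ^ d j) + E * (\<Prod>j<S. \<eta> ^ d j))"
    unfolding draw_sum_def
  proof (rule sum_mono)
    fix d assume d: "d \<in> PiE {..<S} (\<lambda>j. {1..m j})"
    then have "\<forall>j<S. d j \<le> m j"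
      by (auto simp: PiE_iff)
    with assms d show "draw_prob S m d \<le> (\<Prod>j<S. q j ^ d j) + E * (\<Prod>j<S. \<eta> ^ d j)"
      unfolding E_def by (intro draw_prob_le_geometric_plus_tail) auto
  qed
  also have "\<dots> = (\<Prod>j<S. \<Sum>x\<in>{1..m j}. q j ^ x) + E * (\<Prod>j<S. \<Sum>x\<in>{1..m j}. \<eta> ^ x)"
    by (simp add: sum.distrib sum_distrib_left prod_sum_PiE)
  also have "\<dots> \<le> (\<Prod>j<S. q j / (1 - q j)) + E * (\<Prod>j<S. \<eta> / (1 - \<eta>))"
    using q assms(6,7)
    by (intro add_mono mult_left_mono prod_mono conjI sum_power_atLeast1_le sum_nonneg)
      (auto simp: E_def)
  finally show ?thesis
    unfolding E_def by simp
qed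

lemma member_less_sum:
  fixes f :: "'a \<Rightarrow> real"
  assumes "finite I" "\<forall>i\<in>I. 0 < f i" "j \<in> I" "k \<in> I" "j \<noteq> k"
  shows "f j < sum f I"
proof -
  have "f j + f k \<le> sum f I"
    using assms sum_mono2[of I "{j, k}" f] by fastforce
  with assms show ?thesis
    by fastforce
qed

lemma less_sum_of_pos:
  fixes S :: nat
  assumes "2 \<le> S" "\<forall>j<S. 0 < \<alpha> j" "j < S"
  shows "\<alpha> j < (\<Sum>i<S. \<alpha> i :: real)"
  using assms member_less_sum[of "{..<S}" \<alpha> j "if j = 0 then 1 else 0"] by auto

lemma real_sum_proportional:
  fixes S :: nat
  assumes "\<forall>j<S. real (m j) = \<alpha> j * n"
  shows "real (\<Sum>j<S. m j) = (\<Sum>j<S. \<alpha> j) * n"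
  using assms by (simp add: sum_distrib_right)

lemma prod_ratio_proportional:
  fixes S :: nat
  assumes "\<forall>j<S. real (m j) = \<alpha> j * n" and "n \<noteq> 0"
  shows "(\<Prod>j<S. real (m j)) / (\<Prod>j<S. real ((\<Sum>i<S. m i) - m j)) =
    (\<Prod>j<S. \<alpha> j / ((\<Sum>i<S. \<alpha> i) - \<alpha> j))"
proof -
  have "real ((\<Sum>i<S. m i) - m j) = ((\<Sum>i<S. \<alpha> i) - \<alpha> j) * n" if "j < S" for j
  proof -
    have "m j \<le> (\<Sum>i<S. m i)"
      using that by (intro member_le_sum) auto
    with assms(1) that real_sum_proportional[OF assms(1)] show ?thesis
      by (simp add: of_nat_diff algebra_simps)
  qed
  with assms have "(\<Prod>j<S. real (m j) / real ((\<Sum>i<S. m i) - m j)) =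
      (\<Prod>j<S. \<alpha> j / ((\<Sum>i<S. \<alpha> i) - \<alpha> j))"
    by (intro prod.cong) auto
  then show ?thesis
    by (simp add: prod_dividef)
qed

text \<open>The base \<open>(m\<^sub>j - K) / M\<close>, written as an expression in \<open>n\<close> whose limit is evident.\<close>
lemma draw_sum_ge_proportional:
  fixes S :: nat and \<alpha> :: "nat \<Rightarrow> real" and n :: real
  defines "A \<equiv> \<Sum>i<S. \<alpha> i"
  assumes m: "\<forall>j<S. real (m j) = \<alpha> j * n" and "n \<noteq> 0" and K: "\<forall>j<S. real K \<le> \<alpha> j * n"
  shows "(\<Prod>j<S. \<Sum>x\<in>{1..K}. (\<alpha> j / A - real K / A * inverse n) ^ x) \<le> draw_sum S m"
proof -
  have "(real (m j) - real K) / real (\<Sum>j<S. m j) = \<alpha> j / A - real K / A * inverse n"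
    if "j < S" for j
    using m that \<open>n \<noteq> 0\<close> unfolding real_sum_proportional[OF m, folded A_def]
    by (cases "A = 0") (simp_all add: field_simps)
  then have "(\<Prod>j<S. \<Sum>x\<in>{1..K}. (\<alpha> j / A - real K / A * inverse n) ^ x) =
      (\<Prod>j<S. \<Sum>x\<in>{1..K}. ((real (m j) - real K) / real (\<Sum>j<S. m j)) ^ x)"
    by (intro prod.cong refl) simp
  also have "\<dots> \<le> draw_sum S m"
  proof (rule prod_sum_power_le_draw_sum)
    have "\<forall>j<S. real K \<le> real (m j)"
      using m K by simp
    then show "\<forall>j<S. K \<le> m j"
      by simp
  qed
  finally show ?thesis .
qed

lemma eventually_draw_sum_gt:
  fixes S :: nat and \<alpha> :: "nat \<Rightarrow> real"
  assumes "2 \<le> S" and pos: "\<forall>j<S. 0 < \<alpha> j"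
    and c: "c < (\<Prod>j<S. \<alpha> j / ((\<Sum>i<S. \<alpha> i) - \<alpha> j))"
  shows "eventually (\<lambda>n. \<forall>m. (\<forall>j<S. real (m j) = \<alpha> j * n) \<longrightarrow> c < draw_sum S m) at_top"
proof -
  define A where "A = (\<Sum>i<S. \<alpha> i)"
  have gap: "\<alpha> j < A" if "j < S" for j
    unfolding A_def using assms(1) pos that by (rule less_sum_of_pos)
  have "0 < A"
    using pos[rule_format, of 0] gap[of 0] assms(1) by simp
  have "(\<lambda>K. \<Prod>j<S. \<Sum>x\<in>{1..K}. (\<alpha> j / A) ^ x) \<longlonglongrightarrow> (\<Prod>j<S. (\<alpha> j / A) / (1 - \<alpha> j / A))"
    using pos gap \<open>0 < A\<close> by (intro tendsto_prod tendsto_sum_power_atLeast1) auto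
  moreover have "(\<Prod>j<S. (\<alpha> j / A) / (1 - \<alpha> j / A)) = (\<Prod>j<S. \<alpha> j / (A - \<alpha> j))"
    using gap \<open>0 < A\<close> by (intro prod.cong) (auto simp: field_simps)
  ultimately have "eventually (\<lambda>K. c < (\<Prod>j<S. \<Sum>x\<in>{1..K}. (\<alpha> j / A) ^ x)) sequentially"
    using c unfolding A_def by (auto intro: order_tendstoD(1))
  then obtain K where K: "c < (\<Prod>j<S. \<Sum>x\<in>{1..K}. (\<alpha> j / A) ^ x)"
    by (auto simp: eventually_sequentially)
  have "((\<lambda>n. \<Prod>j<S. \<Sum>x\<in>{1..K}. (\<alpha> j / A - real K / A * inverse n) ^ x) \<longlongrightarrow>
      (\<Prod>j<S. \<Sum>x\<in>{1..K}. (\<alpha> j / A - real K / A * 0) ^ x)) at_top"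
    by (intro tendsto_intros tendsto_inverse_0_at_top filterlim_ident)
  then have "eventually (\<lambda>n. c < (\<Prod>j<S. \<Sum>x\<in>{1..K}. (\<alpha> j / A - real K / A * inverse n) ^ x)) at_top"
    using K by (simp add: order_tendstoD(1))
  moreover have "eventually (\<lambda>n. \<forall>j\<in>{..<S}. real K \<le> \<alpha> j * n) at_top"
  proof (intro eventually_ball_finite ballI)
    fix j assume "j \<in> {..<S}"
    with pos have "0 < \<alpha> j"
      by simp
    then show "eventually (\<lambda>n. real K \<le> \<alpha> j * n) at_top"
      using eventually_ge_at_top[of "real K / \<alpha> j"]
      by (auto elim: eventually_mono simp: pos_divide_le_eq mult.commute)
  qed auto
  ultimately show ?thesis
    using eventually_gt_at_top[of 0]
  proof eventually_elim
    case (elim n)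
    then show ?case
      using draw_sum_ge_proportional[of S _ \<alpha> n K] unfolding A_def by force
  qed
qed

lemma exists_slack:
  fixes \<alpha> :: "nat \<Rightarrow> real"
  assumes gap: "\<forall>j<S. \<alpha> j < A" and c: "(\<Prod>j<S. \<alpha> j / (A - \<alpha> j)) < c"
  shows "\<exists>\<delta>. 0 < \<delta> \<and> \<delta> < 1 \<and> (\<forall>j<S. \<alpha> j < (1 - \<delta>) * A) \<and>
    (\<Prod>j<S. \<alpha> j / ((1 - \<delta>) * A - \<alpha> j)) < c"
proof -
  have "eventually (\<lambda>\<delta>. 0 < (1 - \<delta>) * A - \<alpha> j) (at_right 0)" if "j < S" for j
  proof (rule order_tendstoD(1))
    show "((\<lambda>\<delta>. (1 - \<delta>) * A - \<alpha> j) \<longlongrightarrow> (1 - 0) * A - \<alpha> j) (at_right 0)"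
      by (intro tendsto_intros)
  qed (use gap that in simp)
  then have "eventually (\<lambda>\<delta>. \<forall>j\<in>{..<S}. \<alpha> j < (1 - \<delta>) * A) (at_right 0)"
    by (intro eventually_ball_finite ballI) auto
  moreover have "((\<lambda>\<delta>. \<Prod>j<S. \<alpha> j / ((1 - \<delta>) * A - \<alpha> j)) \<longlongrightarrow>
      (\<Prod>j<S. \<alpha> j / ((1 - 0) * A - \<alpha> j))) (at_right 0)"
    using gap by (intro tendsto_intros) auto
  then have "eventually (\<lambda>\<delta>. (\<Prod>j<S. \<alpha> j / ((1 - \<delta>) * A - \<alpha> j)) < c) (at_right 0)"
    using c by (auto dest: order_tendstoD(2))
  moreover have "eventually (\<lambda>\<delta>. 0 < \<delta> \<and> \<delta> < (1 :: real)) (at_right 0)"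
    unfolding eventually_at_right_field by (intro exI[of _ 1]) auto
  ultimately have "eventually (\<lambda>\<delta>. 0 < \<delta> \<and> \<delta> < 1 \<and> (\<forall>j<S. \<alpha> j < (1 - \<delta>) * A) \<and>
      (\<Prod>j<S. \<alpha> j / ((1 - \<delta>) * A - \<alpha> j)) < c) (at_right 0)"
    by eventually_elim auto
  then show ?thesis
    by (rule eventually_happens'[OF trivial_limit_at_right_real])
qed

lemma tendsto_powr_at_top_0:
  fixes \<eta> a :: real
  assumes "0 < \<eta>" "\<eta> < 1" "0 < a"
  shows "((\<lambda>n. \<eta> powr (a * n)) \<longlongrightarrow> 0) at_top"
proof -
  have "a * ln \<eta> < 0"
    using assms by (simp add: mult_pos_neg)
  then have "((\<lambda>n. exp (a * ln \<eta> * n)) \<longlongrightarrow> 0) at_top"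
    by (intro filterlim_compose[OF exp_at_bot]
        filterlim_tendsto_neg_mult_at_bot[OF tendsto_const _ filterlim_ident])
  then show ?thesis
    using assms by (simp add: powr_def algebra_simps)
qed

lemma draw_sum_le_proportional:
  fixes S :: nat and \<alpha> :: "nat \<Rightarrow> real" and n \<delta> \<eta> :: real
  defines "A \<equiv> \<Sum>i<S. \<alpha> i"
  assumes "2 \<le> S" and pos: "\<forall>j<S. 0 < \<alpha> j" and m: "\<forall>j<S. real (m j) = \<alpha> j * n" and "0 < n"
    and "0 \<le> \<delta>" "\<delta> < 1" and slack: "\<forall>j<S. \<alpha> j < (1 - \<delta>) * A"
    and "0 < \<eta>" "\<eta> < 1" and \<eta>: "\<eta>\<^sup>2 = sqrt (1 - min (\<alpha> 0) (\<alpha> (S - 1)) / A)"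
  shows "draw_sum S m \<le>
    (\<Prod>j<S. \<alpha> j / ((1 - \<delta>) * A - \<alpha> j)) + \<eta> powr (\<delta> * A * n) * (\<eta> / (1 - \<eta>)) ^ S"
proof -
  define q where "q j = \<alpha> j / ((1 - \<delta>) * A)" for j
  have M: "real (\<Sum>j<S. m j) = A * n"
    unfolding A_def using real_sum_proportional[OF m] by simp
  have "0 < A"
    unfolding A_def using pos assms(2) by (intro sum_pos) (auto simp: lessThan_empty_iff)
  have q: "0 \<le> q j" "q j < 1" "q j / (1 - q j) = \<alpha> j / ((1 - \<delta>) * A - \<alpha> j)"
    "real (m j) = q j * ((1 - \<delta>) * real (\<Sum>j<S. m j))" if "j < S" for j
  proof -
    have "0 < (1 - \<delta>) * A" "0 < (1 - \<delta>) * A - \<alpha> j"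
      using slack \<open>0 < A\<close> \<open>\<delta> < 1\<close> that by auto
    with pos m that show "0 \<le> q j" "q j < 1" "q j / (1 - q j) = \<alpha> j / ((1 - \<delta>) * A - \<alpha> j)"
      "real (m j) = q j * ((1 - \<delta>) * real (\<Sum>j<S. m j))"
      unfolding q_def M by (auto simp: divide_simps)
  qed
  have "0 < real (\<Sum>j<S. m j)"
    unfolding M using \<open>0 < A\<close> \<open>0 < n\<close> by simp
  then have "0 < (\<Sum>j<S. m j)"
    by (simp only: of_nat_0_less_iff)
  have "\<forall>j<S. 0 < real (m j)"
    using m pos \<open>0 < n\<close> by simp
  then have mpos: "\<forall>j<S. 0 < m j"
    by simp
  have "real (min (m 0) (m (S - 1))) = min (\<alpha> 0) (\<alpha> (S - 1)) * n"
    using m assms(2) \<open>0 < n\<close> unfolding of_nat_min by (simp add: min_mult_distrib_right)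
  then have "sqrt (1 - real (min (m 0) (m (S - 1))) / real (\<Sum>j<S. m j)) = \<eta>\<^sup>2"
    unfolding \<eta> M using \<open>0 < n\<close> by simp
  then have decay: "\<forall>d \<in> PiE {..<S} (\<lambda>j. {1..m j}). draw_prob S m d \<le> (\<eta>\<^sup>2) ^ (\<Sum>j<S. d j)"
    using draw_prob_le_sqrt_power[OF assms(2) _ mpos] by (force simp: PiE_iff)
  have "draw_sum S m \<le> (\<Prod>j<S. q j / (1 - q j)) +
      \<eta> powr (\<delta> * real (\<Sum>j<S. m j)) * (\<eta> / (1 - \<eta>)) ^ S"
    using q \<open>0 < (\<Sum>j<S. m j)\<close> \<open>0 \<le> \<delta>\<close> \<open>\<delta> < 1\<close> \<open>0 < \<eta>\<close> \<open>\<eta> < 1\<close> decay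
    by (intro draw_sum_le_geometric_plus_tail) auto
  moreover have "(\<Prod>j<S. q j / (1 - q j)) = (\<Prod>j<S. \<alpha> j / ((1 - \<delta>) * A - \<alpha> j))"
    using q(3) by (intro prod.cong) auto
  ultimately show ?thesis
    unfolding M by (simp add: mult.assoc)
qed

lemma eventually_draw_sum_lt:
  fixes S :: nat and \<alpha> :: "nat \<Rightarrow> real"
  assumes "2 \<le> S" and pos: "\<forall>j<S. 0 < \<alpha> j"
    and c: "(\<Prod>j<S. \<alpha> j / ((\<Sum>i<S. \<alpha> i) - \<alpha> j)) < c"
  shows "eventually (\<lambda>n. \<forall>m. (\<forall>j<S. real (m j) = \<alpha> j * n) \<longrightarrow> draw_sum S m < c) at_top"
proof -
  define A where "A = (\<Sum>i<S. \<alpha> i)"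
  define c' where "c' = ((\<Prod>j<S. \<alpha> j / (A - \<alpha> j)) + c) / 2"
  have gap: "\<forall>j<S. \<alpha> j < A"
    unfolding A_def using assms(1) pos less_sum_of_pos by blast
  have "0 < A"
    using pos[rule_format, of 0] gap[rule_format, of 0] assms(1) by simp
  have "c' < c"
    using c unfolding c'_def A_def by simp
  obtain \<delta> where "0 < \<delta>" "\<delta> < 1" and slack: "\<forall>j<S. \<alpha> j < (1 - \<delta>) * A"
    and "(\<Prod>j<S. \<alpha> j / ((1 - \<delta>) * A - \<alpha> j)) < c'"
    using exists_slack[OF gap, of c'] c unfolding c'_def A_def by auto
  define a where "a = min (\<alpha> 0) (\<alpha> (S - 1))"
  have "0 < a"
    unfolding a_def using pos assms(1) by auto
  have "a < A"
    unfolding a_def using gap assms(1) by (simp add: min.strict_coboundedI1)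
  define \<eta> where "\<eta> = sqrt (sqrt (1 - a / A))"
  have "0 < \<eta>" "\<eta> < 1" "\<eta>\<^sup>2 = sqrt (1 - a / A)"
    unfolding \<eta>_def using \<open>0 < a\<close> \<open>a < A\<close> by auto
  have "((\<lambda>n. \<eta> powr ((\<delta> * A) * n) * (\<eta> / (1 - \<eta>)) ^ S) \<longlongrightarrow> 0 * (\<eta> / (1 - \<eta>)) ^ S) at_top"
    using \<open>0 < \<eta>\<close> \<open>\<eta> < 1\<close> \<open>0 < \<delta>\<close> \<open>0 < A\<close> by (intro tendsto_intros tendsto_powr_at_top_0) auto
  then have "eventually (\<lambda>n. \<eta> powr ((\<delta> * A) * n) * (\<eta> / (1 - \<eta>)) ^ S < c - c') at_top"
    using \<open>c' < c\<close> by (intro order_tendstoD(2)) auto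
  then show ?thesis
    using eventually_gt_at_top[of 0]
  proof eventually_elim
    case (elim n)
    then show ?case
      using draw_sum_le_proportional[OF assms(1) pos _ _ _ _ _ \<open>0 < \<eta>\<close> \<open>\<eta> < 1\<close>, of _ n \<delta>]
        slack \<open>0 < \<delta>\<close> \<open>\<delta> < 1\<close> \<open>\<eta>\<^sup>2 = _\<close> \<open>(\<Prod>j<S. _) < c'\<close>
      unfolding A_def a_def by fastforce
  qed
qed

lemma eventually_blockB_ratio_close:
  fixes S :: nat and \<alpha> :: "nat \<Rightarrow> real"
  assumes "2 \<le> S" and "\<forall>j<S. 0 < \<alpha> j" and "0 < \<epsilon>"
  shows "eventually (\<lambda>n. \<forall>m. (\<forall>j<S. real (m j) = \<alpha> j * n) \<longrightarrow>
    \<bar>blockB S m / ((\<Prod>j<S. real (m j)) / (\<Prod>j<S. real ((\<Sum>i<S. m i) - m j))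
      * fact (\<Sum>i<S. m i) / (\<Prod>j<S. fact (m j))) - 1\<bar> < \<epsilon>) at_top"
proof -
  define C where "C = (\<Prod>j<S. \<alpha> j / ((\<Sum>i<S. \<alpha> i) - \<alpha> j))"
  have "0 < C"
    unfolding C_def using assms less_sum_of_pos by (intro prod_pos) auto
  with \<open>0 < \<epsilon>\<close> have "C * (1 - \<epsilon>) < C" "C < C * (1 + \<epsilon>)"
    by simp_all
  then have "eventually (\<lambda>n. \<forall>m. (\<forall>j<S. real (m j) = \<alpha> j * n) \<longrightarrow> C * (1 - \<epsilon>) < draw_sum S m) at_top"
    and "eventually (\<lambda>n. \<forall>m. (\<forall>j<S. real (m j) = \<alpha> j * n) \<longrightarrow> draw_sum S m < C * (1 + \<epsilon>)) at_top"
    using eventually_draw_sum_gt[OF assms(1,2)] eventually_draw_sum_lt[OF assms(1,2)]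
    unfolding C_def by blast+
  then show ?thesis
    using eventually_gt_at_top[of 0]
  proof eventually_elim
    case (elim n)
    show ?case
    proof (intro allI impI)
      fix m assume m: "\<forall>j<S. real (m j) = \<alpha> j * n"
      have "0 < fact (\<Sum>i<S. m i) / (\<Prod>j<S. fact (m j) :: real)"
        by (intro divide_pos_pos prod_pos) auto
      then have "blockB S m / ((\<Prod>j<S. real (m j)) / (\<Prod>j<S. real ((\<Sum>i<S. m i) - m j))
          * fact (\<Sum>i<S. m i) / (\<Prod>j<S. fact (m j))) = draw_sum S m / C"
        using prod_ratio_proportional[OF m] elim \<open>0 < C\<close>
        unfolding blockB_eq_multinomial_mult_draw_sum C_def[symmetric] by (simp add: field_simps)
      moreover have "1 - \<epsilon> < draw_sum S m / C" "draw_sum S m / C < 1 + \<epsilon>"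
        using elim m \<open>0 < C\<close> by (simp_all add: field_simps)
      ultimately show "\<bar>blockB S m / ((\<Prod>j<S. real (m j)) / (\<Prod>j<S. real ((\<Sum>i<S. m i) - m j))
          * fact (\<Sum>i<S. m i) / (\<Prod>j<S. fact (m j))) - 1\<bar> < \<epsilon>"
        by (simp add: abs_less_iff)
    qed
  qed
qed

theorem mainTheorem16:
  fixes S :: nat and \<alpha> :: "nat \<Rightarrow> real"
  assumes "S \<ge> 2" and "\<forall>j<S. \<alpha> j > 0"
  shows "\<forall>\<epsilon>>0. \<exists>N. \<forall>(n::real) (m::nat \<Rightarrow> nat).
           n \<ge> N \<and> (\<forall>j<S. m j > 0 \<and> real (m j) = \<alpha> j * n) \<longrightarrow>
           \<bar>blockB S m /
              ((\<Prod>j<S. real (m j)) / (\<Prod>j<S. real ((\<Sum>i<S. m i) - m j))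
                * fact (\<Sum>i<S. m i) / (\<Prod>j<S. fact (m j))) - 1\<bar> < \<epsilon>"
  using eventually_blockB_ratio_close[OF assms] unfolding eventually_at_top_linorder by blast

end
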